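(* Let $(\mathsf P,\mathcal O)$ be a semitopology. Then every topen set $T$ is contained in a unique maximal topen set (maximal with respect to subset inclusion among topen sets).
   Context: A semitopology is a pair $(\mathsf P,\mathcal O)$ where $\mathsf P$ is a set and $\mathcal O\subseteq\mathcal P(\mathsf P)$ contains $\varnothing$ and $\mathsf P$ and is closed under arbitrary unions. Write $X\between Y$ when $X\cap Y\neq\varnothing$. A set $T\subseteq\mathsf P$ is transitive when for all $O,O'\in\mathcal O$, $O\between T$ and $T\between O'$ imply $O\between O'$. A set is topen when it is nonempty, open, and transitive. *)

theory Defs
  imports Main
begin

definition semitopology :: "'a set \<Rightarrow> 'a set set \<Rightarrow> bool" where
  "semitopology P Opens \<longleftrightarrow>
     (\<forall>U\<in>Opens. U \<subseteq> P) \<and> {} \<in> Opens \<and> P \<in> Opens \<and>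
     (\<forall>X. X \<subseteq> Opens \<longrightarrow> \<Union>X \<in> Opens)"

definition between :: "'a set \<Rightarrow> 'a set \<Rightarrow> bool" where
  "between X Y \<longleftrightarrow> X \<inter> Y \<noteq> {}"

definition transitive_set :: "'a set set \<Rightarrow> 'a set \<Rightarrow> bool" where
  "transitive_set Opens T \<longleftrightarrow>
     (\<forall>U\<in>Opens. \<forall>V\<in>Opens. between U T \<and> between T V \<longrightarrow> between U V)"

definition topen :: "'a set set \<Rightarrow> 'a set \<Rightarrow> bool" where
  "topen Opens T \<longleftrightarrow> T \<noteq> {} \<and> T \<in> Opens \<and> transitive_set Opens T"

definition maximal_topen :: "'a set set \<Rightarrow> 'a set \<Rightarrow> bool" where
  "maximal_topen Opens T \<longleftrightarrow> topen Opens T \<and>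
     (\<forall>T'. topen Opens T' \<and> T \<subseteq> T' \<longrightarrow> T' = T)"

end

theory Submission
  imports Defs
begin

text \<open>The maximal topen containing a topen \<open>T\<close> is the union of all topens meeting \<open>T\<close>:
an open set meeting this union meets one of its members and hence, by transitivity of that
member, meets \<open>T\<close> itself; so transitivity of the union reduces to transitivity of \<open>T\<close>.
Any topen containing \<open>T\<close> meets \<open>T\<close>, hence lies in the union, which gives maximality and
uniqueness at once.\<close>

lemma between_sym: "between X Y \<longleftrightarrow> between Y X"
  unfolding between_def by blast

lemma between_Union_iff: "between U (\<Union>F) \<longleftrightarrow> (\<exists>S\<in>F. between U S)"
  unfolding between_def by blast

lemma between_if_subset: "T \<noteq> {} \<Longrightarrow> T \<subseteq> T' \<Longrightarrow> between T' T"
  unfolding between_def by blast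

lemma transitive_setD:
  "transitive_set Opens T \<Longrightarrow> U \<in> Opens \<Longrightarrow> V \<in> Opens \<Longrightarrow> between U T \<Longrightarrow> between T V
    \<Longrightarrow> between U V"
  unfolding transitive_set_def by blast

lemma transitive_set_Union:
  assumes T: "T \<in> Opens" "transitive_set Opens T"
    and F: "\<And>S. S \<in> F \<Longrightarrow> transitive_set Opens S \<and> between S T"
  shows "transitive_set Opens (\<Union>F)"
  unfolding transitive_set_def
proof (intro ballI impI)
  have meets_T: "between U T" if "U \<in> Opens" "between U (\<Union>F)" for U
  proof -
    from that(2) obtain S where "S \<in> F" "between U S"
      by (auto simp: between_Union_iff)
    with F that(1) T(1) show ?thesis
      by (blast intro: transitive_setD)
  qed
  fix U V assume U: "U \<in> Opens" and V: "V \<in> Opens"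
    and "between U (\<Union>F) \<and> between (\<Union>F) V"
  then have "between U T" "between T V"
    using meets_T between_sym by blast+
  with T(2) U V show "between U V"
    by (rule transitive_setD)
qed

definition topen_hull :: "'a set set \<Rightarrow> 'a set \<Rightarrow> 'a set" where
  "topen_hull Opens T = \<Union>{S. topen Opens S \<and> between S T}"

lemma topen_subset_topen_hull:
  "topen Opens S \<Longrightarrow> between S T \<Longrightarrow> S \<subseteq> topen_hull Opens T"
  unfolding topen_hull_def by blast

lemma topen_superset_subset_topen_hull:
  assumes "topen Opens S" "topen Opens T" "T \<subseteq> S"
  shows "S \<subseteq> topen_hull Opens T"
proof -
  have "between S T"
    using assms(2,3) unfolding topen_def by (blast intro: between_if_subset)
  with assms(1) show ?thesis
    by (rule topen_subset_topen_hull)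
qed

lemma subset_topen_hull: "topen Opens T \<Longrightarrow> T \<subseteq> topen_hull Opens T"
  by (rule topen_superset_subset_topen_hull) auto

lemma topen_hull_topen:
  assumes "semitopology P Opens" "topen Opens T"
  shows "topen Opens (topen_hull Opens T)"
proof -
  have T: "T \<noteq> {}" "T \<in> Opens" "transitive_set Opens T"
    using assms(2) unfolding topen_def by auto
  have "T \<subseteq> topen_hull Opens T"
    using assms(2) by (rule subset_topen_hull)
  moreover have "topen_hull Opens T \<in> Opens"
  proof -
    have "{S. topen Opens S \<and> between S T} \<subseteq> Opens"
      unfolding topen_def by blast
    with assms(1) show ?thesis
      unfolding topen_hull_def semitopology_def by blast
  qed
  moreover have "transitive_set Opens (topen_hull Opens T)"
    unfolding topen_hull_def using T(2,3)
    by (rule transitive_set_Union) (auto simp: topen_def)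
  ultimately show ?thesis
    using T(1) unfolding topen_def by blast
qed

lemma maximal_topen_topen_hull:
  assumes "semitopology P Opens" "topen Opens T"
  shows "maximal_topen Opens (topen_hull Opens T)"
  unfolding maximal_topen_def
proof (intro conjI allI impI)
  show "topen Opens (topen_hull Opens T)"
    using assms by (rule topen_hull_topen)
  fix S assume "topen Opens S \<and> topen_hull Opens T \<subseteq> S"
  with subset_topen_hull[OF assms(2)] show "S = topen_hull Opens T"
    using assms(2) topen_superset_subset_topen_hull by blast
qed

theorem corollary3p13:
  fixes P :: "'a set" and Opens :: "'a set set" and T :: "'a set"
  assumes "semitopology P Opens"
    and "topen Opens T"
  shows "\<exists>!M. maximal_topen Opens M \<and> T \<subseteq> M"
proof (rule ex1I)
  show "maximal_topen Opens (topen_hull Opens T) \<and> T \<subseteq> topen_hull Opens T"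
    using maximal_topen_topen_hull[OF assms] subset_topen_hull[OF assms(2)] by blast
  fix M assume M: "maximal_topen Opens M \<and> T \<subseteq> M"
  then have "M \<subseteq> topen_hull Opens T"
    using assms(2) topen_superset_subset_topen_hull unfolding maximal_topen_def by blast
  then show "M = topen_hull Opens T"
    using M topen_hull_topen[OF assms] unfolding maximal_topen_def by blast
qed

end
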